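(* Let $P$ be a poset with $n$ elements that has a unique minimal element, and suppose this minimal element is covered by exactly one element. Then $P$ has exactly $2(n-1)!-(n-2)!$ quasi-tangled labelings.
   Context: A labeling is a bijection $L:P\to[n]$; it is a linear extension if $x<_P y$ implies $L(x)<L(y)$. Promotion $\partial$: for non-maximal $x$, the $L$-successor of $x$ is the element greater than $x$ with minimal label; the promotion chain is $v_1=L^{-1}(1)$, $v_{i+1}$ the $L$-successor of $v_i$, ending at the first maximal $v_m$; $\partial(L)(x)=L(x)-1$ off the chain, $\partial(L)(v_i)=L(v_{i+1})-1$ for $i<m$, $\partial(L)(v_m)=n$. The sorting time of $L$ is the least $k\ge0$ with $\partial^k(L)$ a linear extension; $L$ is quasi-tangled if its sorting time is $n-2$. *)

theory Defs
  imports Main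
begin

definition pless :: "('a \<times> 'a) set \<Rightarrow> 'a \<Rightarrow> 'a \<Rightarrow> bool" where
  "pless R x y \<longleftrightarrow> (x, y) \<in> R \<and> x \<noteq> y"

definition is_minimal :: "'a set \<Rightarrow> ('a \<times> 'a) set \<Rightarrow> 'a \<Rightarrow> bool" where
  "is_minimal P R x \<longleftrightarrow> x \<in> P \<and> \<not> (\<exists>y\<in>P. pless R y x)"

definition is_maximal :: "'a set \<Rightarrow> ('a \<times> 'a) set \<Rightarrow> 'a \<Rightarrow> bool" where
  "is_maximal P R x \<longleftrightarrow> x \<in> P \<and> \<not> (\<exists>y\<in>P. pless R x y)"

text \<open>y covers x\<close>
definition covers :: "'a set \<Rightarrow> ('a \<times> 'a) set \<Rightarrow> 'a \<Rightarrow> 'a \<Rightarrow> bool" where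
  "covers P R x y \<longleftrightarrow> x \<in> P \<and> y \<in> P \<and> pless R x y \<and> \<not> (\<exists>z\<in>P. pless R x z \<and> pless R z y)"

text \<open>Labelings: bijections P -> {1..n}, n = card P; normalised to 0 outside P so that
  they can be counted as functions.\<close>
definition labelings :: "'a set \<Rightarrow> ('a \<Rightarrow> nat) set" where
  "labelings P = {L. bij_betw L P {1..card P} \<and> (\<forall>x. x \<notin> P \<longrightarrow> L x = 0)}"

definition is_linear_extension :: "'a set \<Rightarrow> ('a \<times> 'a) set \<Rightarrow> ('a \<Rightarrow> nat) \<Rightarrow> bool" where
  "is_linear_extension P R L \<longleftrightarrow> (\<forall>x\<in>P. \<forall>y\<in>P. pless R x y \<longrightarrow> L x < L y)"

definition lsucc :: "'a set \<Rightarrow> ('a \<times> 'a) set \<Rightarrow> ('a \<Rightarrow> nat) \<Rightarrow> 'a \<Rightarrow> 'a" where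
  "lsucc P R L x = (THE y. y \<in> P \<and> pless R x y \<and> (\<forall>z\<in>P. pless R x z \<longrightarrow> L y \<le> L z))"

definition pchain :: "'a set \<Rightarrow> ('a \<times> 'a) set \<Rightarrow> ('a \<Rightarrow> nat) \<Rightarrow> nat \<Rightarrow> 'a" where
  "pchain P R L i = ((lsucc P R L) ^^ i) (inv_into P L 1)"

definition pchain_end :: "'a set \<Rightarrow> ('a \<times> 'a) set \<Rightarrow> ('a \<Rightarrow> nat) \<Rightarrow> nat" where
  "pchain_end P R L = (LEAST i. is_maximal P R (pchain P R L i))"

definition promotion :: "'a set \<Rightarrow> ('a \<times> 'a) set \<Rightarrow> ('a \<Rightarrow> nat) \<Rightarrow> ('a \<Rightarrow> nat)" where
  "promotion P R L x =
     (if x \<notin> P then 0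
      else if x = pchain P R L (pchain_end P R L) then card P
      else if (\<exists>i < pchain_end P R L. x = pchain P R L i) then L (lsucc P R L x) - 1
      else L x - 1)"

text \<open>L is quasi-tangled iff its sorting time is n - 2, i.e. promotion^(n-2)(L) is a
  linear extension and promotion^k(L) is not for any k < n - 2.\<close>
definition sorting_time :: "'a set \<Rightarrow> ('a \<times> 'a) set \<Rightarrow> ('a \<Rightarrow> nat) \<Rightarrow> nat" where
  "sorting_time P R L = (LEAST k. is_linear_extension P R ((promotion P R ^^ k) L))"

definition quasi_tangled :: "'a set \<Rightarrow> ('a \<times> 'a) set \<Rightarrow> ('a \<Rightarrow> nat) \<Rightarrow> bool" where
  "quasi_tangled P R L \<longleftrightarrow>
     is_linear_extension P R ((promotion P R ^^ (card P - 2)) L) \<and>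
     (\<forall>k < card P - 2. \<not> is_linear_extension P R ((promotion P R ^^ k) L))"

end

theory Submission
  imports Defs
begin

text \<open>
  Let m be the least element and b its unique cover, so that every element other than m
  lies above b. After k promotions the labels greater than n - k are already in the
  order of the poset, so from step n - 3 on a labeling is a linear extension exactly
  when m and b carry the labels 1 and 2. Under promotion the pair of labels of m and b
  evolves by an explicit rule of its own; following it, the pair first becomes (1, 2)
  at step n - 2 precisely when b is labeled n or m is labeled n - 1. Inclusion-exclusion
  counts these labelings as (n - 1)! + (n - 1)! - (n - 2)!.
\<close>

section \<open>Counting bijective labelings\<close>

definition bij_labelings :: "'a set \<Rightarrow> nat set \<Rightarrow> ('a \<Rightarrow> nat) set" where
  "bij_labelings A B = {f. bij_betw f A B \<and> (\<forall>x. x \<notin> A \<longrightarrow> f x = 0)}"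

lemma labelings_eq_bij_labelings: "labelings P = bij_labelings P {1..card P}"
  by (simp add: labelings_def bij_labelings_def)

lemma finite_bij_labelings:
  assumes "finite A" "finite B"
  shows "finite (bij_labelings A B)"
proof -
  have "bij_labelings A B \<subseteq> {f. \<forall>x. (x \<in> A \<longrightarrow> f x \<in> B) \<and> (x \<notin> A \<longrightarrow> f x = 0)}"
    unfolding bij_labelings_def by (auto dest: bij_betw_apply)
  then show ?thesis
    using finite_subset finite_set_of_finite_funs[OF assms] by blast
qed

lemma bij_betw_fun_upd_iff:
  assumes "x \<in> A" "a \<in> B"
  shows "bij_betw (f(x := a)) A B \<longleftrightarrow> bij_betw f (A - {x}) (B - {a})"
proof -
  have "bij_betw (f(x := a)) A B \<longleftrightarrow> bij_betw (f(x := a)) (A - {x}) (B - {a})"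
    using notIn_Un_bij_betw3[of x "A - {x}" "f(x := a)" "B - {a}"] assms
    by (simp add: insert_absorb)
  also have "\<dots> \<longleftrightarrow> bij_betw f (A - {x}) (B - {a})"
    by (rule bij_betw_cong) simp
  finally show ?thesis .
qed

lemma bij_labelings_fixed_eq_image:
  assumes "x \<in> A" "a \<in> B"
  shows "{f \<in> bij_labelings A B. f x = a} = (\<lambda>g. g(x := a)) ` bij_labelings (A - {x}) (B - {a})"
proof (intro set_eqI iffI)
  fix f assume f: "f \<in> {f \<in> bij_labelings A B. f x = a}"
  then have "f(x := 0) \<in> bij_labelings (A - {x}) (B - {a})"
    using bij_betw_fun_upd_iff[OF assms, of "f(x := 0)"] assms
    by (auto simp: bij_labelings_def)
  moreover have "f = (f(x := 0))(x := a)"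
    using f by auto
  ultimately show "f \<in> (\<lambda>g. g(x := a)) ` bij_labelings (A - {x}) (B - {a})"
    by blast
next
  fix f assume "f \<in> (\<lambda>g. g(x := a)) ` bij_labelings (A - {x}) (B - {a})"
  then show "f \<in> {f \<in> bij_labelings A B. f x = a}"
    using bij_betw_fun_upd_iff[OF assms] assms by (auto simp: bij_labelings_def)
qed

lemma card_bij_labelings_fixed:
  assumes "x \<in> A" "a \<in> B"
  shows "card {f \<in> bij_labelings A B. f x = a \<and> Q f}
       = card {g \<in> bij_labelings (A - {x}) (B - {a}). Q (g(x := a))}"
proof -
  let ?G = "{g \<in> bij_labelings (A - {x}) (B - {a}). Q (g(x := a))}"
  have "{f \<in> bij_labelings A B. f x = a \<and> Q f} = {f \<in> {f \<in> bij_labelings A B. f x = a}. Q f}"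
    by auto
  also have "\<dots> = {f \<in> (\<lambda>g. g(x := a)) ` bij_labelings (A - {x}) (B - {a}). Q f}"
    unfolding bij_labelings_fixed_eq_image[OF assms] ..
  also have "\<dots> = (\<lambda>g. g(x := a)) ` ?G"
    by auto
  finally have image: "{f \<in> bij_labelings A B. f x = a \<and> Q f} = (\<lambda>g. g(x := a)) ` ?G" .
  have "inj_on (\<lambda>g. g(x := a)) ?G"
  proof (rule inj_onI)
    fix g h assume "g \<in> ?G" "h \<in> ?G" "g(x := a) = h(x := a)"
    moreover have "g x = 0" "h x = 0"
      using \<open>g \<in> ?G\<close> \<open>h \<in> ?G\<close> by (simp_all add: bij_labelings_def)
    ultimately show "g = h"
      by (metis fun_upd_idem_iff fun_upd_upd)
  qed
  then show ?thesis
    unfolding image by (rule card_image)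
qed

lemma card_bij_labelings:
  assumes "finite A" "finite B" "card A = card B"
  shows "card (bij_labelings A B) = fact (card A)"
  using assms
proof (induction "card A" arbitrary: A B)
  case 0
  then have "bij_labelings A B = {\<lambda>_. 0}"
    by (auto simp: bij_labelings_def bij_betw_def)
  then show ?case
    using 0 by simp
next
  case (Suc k)
  then obtain x where x: "x \<in> A"
    by (metis card_eq_SucD insertI1)
  let ?F = "\<lambda>a. {f \<in> bij_labelings A B. f x = a}"
  have "bij_labelings A B = (\<Union>a\<in>B. ?F a)"
    using x by (auto simp: bij_labelings_def dest: bij_betw_apply)
  then have "card (bij_labelings A B) = card (\<Union>a\<in>B. ?F a)"
    by (rule arg_cong)
  also have "\<dots> = (\<Sum>a\<in>B. card (?F a))"
    using Suc.prems finite_bij_labelings[of A B] by (intro card_UN_disjoint) auto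
  also have "\<dots> = (\<Sum>a\<in>B. fact k)"
  proof (rule sum.cong)
    fix a assume a: "a \<in> B"
    have "card (A - {x}) = k" "card (B - {a}) = k"
      using Suc.hyps(2) Suc.prems x a by simp_all
    then have "card (bij_labelings (A - {x}) (B - {a})) = fact k"
      using Suc.hyps(1)[of "A - {x}" "B - {a}"] Suc.prems by simp
    then show "card (?F a) = fact k"
      using card_bij_labelings_fixed[OF x a, of "\<lambda>_. True"] by simp
  qed simp
  also have "\<dots> = fact (card A)"
  proof -
    have "card A = Suc k" "card B = Suc k"
      using Suc.hyps(2) Suc.prems(3) by simp_all
    then show ?thesis
      by simp
  qed
  finally show ?case .
qed

lemma card_bij_labelings_one_fixed:
  assumes "finite A" "finite B" "card A = card B" "x \<in> A" "a \<in> B"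
  shows "card {f \<in> bij_labelings A B. f x = a} = fact (card A - 1)"
  using card_bij_labelings_fixed[OF assms(4,5), of "\<lambda>_. True"]
    card_bij_labelings[of "A - {x}" "B - {a}"] assms
  by simp

lemma card_bij_labelings_two_fixed:
  assumes "finite A" "finite B" "card A = card B" "x \<in> A" "y \<in> A" "x \<noteq> y" "a \<in> B" "c \<in> B" "a \<noteq> c"
  shows "card {f \<in> bij_labelings A B. f x = a \<and> f y = c} = fact (card A - 2)"
proof -
  have "card {f \<in> bij_labelings A B. f x = a \<and> f y = c}
      = card {g \<in> bij_labelings (A - {x}) (B - {a}). (g(x := a)) y = c}"
    by (rule card_bij_labelings_fixed[OF assms(4,7)])
  also have "\<dots> = card {g \<in> bij_labelings (A - {x}) (B - {a}). g y = c}"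
    using assms(6) by (simp add: not_sym)
  also have "\<dots> = fact (card (A - {x}) - 1)"
  proof (rule card_bij_labelings_one_fixed)
    show "finite (A - {x})" "finite (B - {a})"
      using assms(1,2) by simp_all
    show "card (A - {x}) = card (B - {a})"
      using assms(1-5,7) by simp
    show "y \<in> A - {x}" "c \<in> B - {a}"
      using assms(5,6,8,9) by auto
  qed
  also have "\<dots> = fact (card A - 2)"
    using assms(1,4) by (simp add: numeral_2_eq_2)
  finally show ?thesis .
qed

lemma card_labelings_top_or_second_to_top:
  assumes "finite P" "x \<in> P" "y \<in> P" "x \<noteq> y"
  shows "card {L \<in> labelings P. L x = card P \<or> L y = card P - 1}
    = 2 * fact (card P - 1) - fact (card P - 2)"
proof -
  let ?n = "card P"
  let ?A = "{L \<in> labelings P. L x = ?n}" and ?B = "{L \<in> labelings P. L y = ?n - 1}"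
  have "card {x, y} \<le> ?n"
    using assms by (intro card_mono) auto
  then have n: "?n \<in> {1..?n}" "?n - 1 \<in> {1..?n}" "?n \<noteq> ?n - 1"
    using assms(4) by auto
  have "card ?A = fact (?n - 1)" "card ?B = fact (?n - 1)"
    using card_bij_labelings_one_fixed[of P "{1..?n}"] assms n
    by (simp_all add: labelings_eq_bij_labelings)
  moreover have "card (?A \<inter> ?B) = fact (?n - 2)"
    using card_bij_labelings_two_fixed[of P "{1..?n}" x y] assms n
    by (simp add: labelings_eq_bij_labelings Int_def conj_ac)
  moreover have "finite ?A" "finite ?B"
    using finite_bij_labelings[of P "{1..?n}"] assms(1) by (simp_all add: labelings_eq_bij_labelings)
  moreover have "{L \<in> labelings P. L x = ?n \<or> L y = ?n - 1} = ?A \<union> ?B"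
    by auto
  ultimately show ?thesis
    using card_Un_Int[of ?A ?B] by (simp add: mult_2)
qed

section \<open>Promotion on a finite poset\<close>

lemma labeling_eq_iff:
  "L \<in> labelings P \<Longrightarrow> x \<in> P \<Longrightarrow> y \<in> P \<Longrightarrow> L x = L y \<longleftrightarrow> x = y"
  unfolding labelings_def bij_betw_def inj_on_def by auto

lemma labeling_range:
  "L \<in> labelings P \<Longrightarrow> x \<in> P \<Longrightarrow> 1 \<le> L x \<and> L x \<le> card P"
  unfolding labelings_def by (auto dest: bij_betw_apply)

lemma labeling_inv_into:
  assumes "L \<in> labelings P" "1 \<le> k" "k \<le> card P"
  shows "inv_into P L k \<in> P \<and> L (inv_into P L k) = k"
  using assms bij_betw_inv_into_right[of L P "{1..card P}" k]
  unfolding labelings_def bij_betw_def by (auto intro: inv_into_into)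

locale finite_poset =
  fixes P :: "'a set" and R :: "('a \<times> 'a) set"
  assumes finite_P: "finite P" and partial_order: "partial_order_on P R"
begin

lemma pless_in_P: "pless R x y \<Longrightarrow> x \<in> P \<and> y \<in> P"
  using partial_order_onD(4)[OF partial_order] unfolding pless_def by auto

lemma pless_trans: "pless R x y \<Longrightarrow> pless R y z \<Longrightarrow> pless R x z"
  using partial_order_onD(2,3)[OF partial_order] unfolding pless_def
  by (metis antisymD transD)

lemma pless_irrefl [simp]: "\<not> pless R x x"
  unfolding pless_def by auto

lemma pless_asym: "pless R x y \<Longrightarrow> \<not> pless R y x"
  using pless_trans pless_irrefl by blast

lemma R_refl: "x \<in> P \<Longrightarrow> (x, x) \<in> R"
  using partial_order_onD(1)[OF partial_order] unfolding refl_on_def by blast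

lemma R_trans: "(x, y) \<in> R \<Longrightarrow> (y, z) \<in> R \<Longrightarrow> (x, z) \<in> R"
  using partial_order_onD(2)[OF partial_order] unfolding trans_def by blast

lemma exists_minimal_in:
  assumes "x \<in> S"
  shows "\<exists>z\<in>S. \<forall>y\<in>S. \<not> pless R y z"
proof -
  have "finite R"
    using partial_order_onD(4)[OF partial_order] finite_P by (auto intro: finite_subset)
  then have "wf (R - Id)"
    using partial_order partial_order_on_well_order_on by blast
  then obtain z where "z \<in> S" "\<And>y. (y, z) \<in> R - Id \<Longrightarrow> y \<notin> S"
    using wfE_min assms by metis
  then show ?thesis
    unfolding pless_def by blast
qed

lemma unique_minimal_less:
  assumes "\<exists>!z. is_minimal P R z" "is_minimal P R m" "x \<in> P" "x \<noteq> m"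
  shows "pless R m x"
proof -
  let ?S = "{y \<in> P. (y, x) \<in> R}"
  obtain z where z: "z \<in> ?S" "\<forall>y\<in>?S. \<not> pless R y z"
    using exists_minimal_in[of x ?S] assms(3) R_refl by blast
  have "is_minimal P R z"
    unfolding is_minimal_def
    using z R_trans pless_in_P unfolding pless_def by blast
  then have "z = m"
    using assms(1,2) by blast
  then show ?thesis
    using z assms(4) unfolding pless_def by simp
qed

lemma unique_cover_less:
  assumes "{y. covers P R m y} = {b}" "pless R m x" "x \<noteq> b"
  shows "pless R b x"
proof -
  let ?S = "{y \<in> P. pless R m y \<and> (y, x) \<in> R}"
  obtain z where z: "z \<in> ?S" "\<forall>y\<in>?S. \<not> pless R y z"
    using exists_minimal_in[of x ?S] assms(2) pless_in_P R_refl by blast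
  have "covers P R m z"
    unfolding covers_def
    using z assms(2) pless_in_P R_trans unfolding pless_def by blast
  then have "z = b"
    using assms(1) by blast
  then show ?thesis
    using z assms(3) unfolding pless_def by simp
qed

lemma lsucc_eqI:
  assumes "L \<in> labelings P" "z \<in> P" "pless R x z" "\<forall>z'\<in>P. pless R x z' \<longrightarrow> L z \<le> L z'"
  shows "lsucc P R L x = z"
  unfolding lsucc_def
proof (rule the_equality)
  show "z \<in> P \<and> pless R x z \<and> (\<forall>z'\<in>P. pless R x z' \<longrightarrow> L z \<le> L z')"
    using assms(2-4) by blast
next
  fix y assume y: "y \<in> P \<and> pless R x y \<and> (\<forall>z\<in>P. pless R x z \<longrightarrow> L y \<le> L z)"
  have "L y \<le> L z"
    using y assms(2,3) by blast
  moreover have "L z \<le> L y"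
    using y assms(4) by blast
  ultimately show "y = z"
    using labeling_eq_iff[OF assms(1)] y assms(2) by (metis order_antisym)
qed

lemma lsucc_least:
  assumes "L \<in> labelings P" "x \<in> P" "\<not> is_maximal P R x"
  shows "lsucc P R L x \<in> P \<and> pless R x (lsucc P R L x) \<and>
    (\<forall>z\<in>P. pless R x z \<longrightarrow> L (lsucc P R L x) \<le> L z)"
proof -
  obtain y0 where "y0 \<in> P \<and> pless R x y0"
    using assms unfolding is_maximal_def by blast
  then obtain y where y: "y \<in> P \<and> pless R x y" "\<forall>z. z \<in> P \<and> pless R x z \<longrightarrow> L y \<le> L z"
    using ex_has_least_nat[where P = "\<lambda>z. z \<in> P \<and> pless R x z" and m = L] by blast
  then have "lsucc P R L x = y"
    using lsucc_eqI[OF assms(1)] by blast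
  then show ?thesis
    using y by blast
qed

lemma card_P_ge_1: "P \<noteq> {} \<Longrightarrow> 1 \<le> card P"
  using finite_P by (simp add: Suc_le_eq card_gt_0_iff)

lemma pchain_0:
  assumes "L \<in> labelings P" "P \<noteq> {}"
  shows "pchain P R L 0 \<in> P \<and> L (pchain P R L 0) = 1"
  using labeling_inv_into[OF assms(1) _ card_P_ge_1[OF assms(2)]] by (simp add: pchain_def)

lemma pchain_Suc: "pchain P R L (Suc i) = lsucc P R L (pchain P R L i)"
  by (simp add: pchain_def)

lemma pchain_increasing:
  assumes "L \<in> labelings P" "P \<noteq> {}" "\<forall>j<k. \<not> is_maximal P R (pchain P R L j)"
  shows "pchain P R L k \<in> P \<and> (\<forall>i<k. pless R (pchain P R L i) (pchain P R L k))"
  using assms(3)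
proof (induction k)
  case 0
  then show ?case
    using pchain_0[OF assms(1,2)] by simp
next
  case (Suc k)
  let ?v = "pchain P R L"
  have "?v k \<in> P" and below: "\<forall>i<k. pless R (?v i) (?v k)"
    using Suc by simp_all
  moreover have "\<not> is_maximal P R (?v k)"
    using Suc.prems by simp
  ultimately have "?v (Suc k) \<in> P" "pless R (?v k) (?v (Suc k))"
    using lsucc_least[OF assms(1)] by (simp_all add: pchain_Suc)
  then show ?case
    using below pless_trans by (auto simp: less_Suc_eq)
qed

lemma pchain_reaches_maximal:
  assumes "L \<in> labelings P" "P \<noteq> {}"
  shows "\<exists>i. is_maximal P R (pchain P R L i)"
proof (rule ccontr)
  assume none: "\<nexists>i. is_maximal P R (pchain P R L i)"
  have "inj (pchain P R L)"
  proof (rule injI)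
    fix i j assume eq: "pchain P R L i = pchain P R L j"
    have "\<not> i < j" "\<not> j < i"
      using pchain_increasing[OF assms] none eq by (metis pless_irrefl)+
    then show "i = j"
      by simp
  qed
  moreover have "range (pchain P R L) \<subseteq> P"
    using pchain_increasing[OF assms] none by blast
  ultimately show False
    using finite_P finite_subset infinite_UNIV_nat finite_imageD by metis
qed

lemma pchain_end_maximal:
  "L \<in> labelings P \<Longrightarrow> P \<noteq> {} \<Longrightarrow> is_maximal P R (pchain P R L (pchain_end P R L))"
  unfolding pchain_end_def using pchain_reaches_maximal by (rule LeastI_ex)

lemma not_maximal_before_pchain_end:
  "i < pchain_end P R L \<Longrightarrow> \<not> is_maximal P R (pchain P R L i)"
  unfolding pchain_end_def by (rule not_less_Least)

lemma pchain_end_le: "is_maximal P R (pchain P R L i) \<Longrightarrow> pchain_end P R L \<le> i"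
  unfolding pchain_end_def by (rule Least_le)

lemma pchain_in:
  "L \<in> labelings P \<Longrightarrow> P \<noteq> {} \<Longrightarrow> i \<le> pchain_end P R L \<Longrightarrow> pchain P R L i \<in> P"
  using pchain_increasing[of L i] not_maximal_before_pchain_end by force

lemma pchain_less:
  "L \<in> labelings P \<Longrightarrow> P \<noteq> {} \<Longrightarrow> i < k \<Longrightarrow> k \<le> pchain_end P R L \<Longrightarrow>
    pless R (pchain P R L i) (pchain P R L k)"
  using pchain_increasing[of L k] not_maximal_before_pchain_end by force

lemma pchain_eq_iff:
  assumes "L \<in> labelings P" "P \<noteq> {}" "i \<le> pchain_end P R L" "k \<le> pchain_end P R L"
  shows "pchain P R L i = pchain P R L k \<longleftrightarrow> i = k"
  using pchain_less[OF assms(1,2), of i k] pchain_less[OF assms(1,2), of k i] assms(3,4)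
  by (metis linorder_neqE_nat pless_irrefl)

lemma label_ge_2_if_not_pchain_0:
  assumes "L \<in> labelings P" "P \<noteq> {}" "x \<in> P" "x \<noteq> pchain P R L 0"
  shows "2 \<le> L x"
  using pchain_0[OF assms(1,2)] labeling_eq_iff[OF assms(1)] labeling_range[OF assms(1,3)] assms(3,4)
  by (metis One_nat_def Suc_1 Suc_le_eq le_neq_implies_less)

lemma promotion_pchain_end:
  "L \<in> labelings P \<Longrightarrow> P \<noteq> {} \<Longrightarrow> promotion P R L (pchain P R L (pchain_end P R L)) = card P"
  unfolding promotion_def using pchain_in by auto

lemma promotion_pchain:
  assumes "L \<in> labelings P" "P \<noteq> {}" "i < pchain_end P R L"
  shows "promotion P R L (pchain P R L i) = L (pchain P R L (Suc i)) - 1"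
proof -
  have "pchain P R L i \<noteq> pchain P R L (pchain_end P R L)"
    using pchain_eq_iff[OF assms(1,2)] assms(3) by simp
  then show ?thesis
    unfolding promotion_def using pchain_in[OF assms(1,2)] assms(3) pchain_Suc by auto
qed

lemma promotion_off_pchain:
  assumes "x \<in> P" "\<forall>i\<le>pchain_end P R L. x \<noteq> pchain P R L i"
  shows "promotion P R L x = L x - 1"
proof -
  have "\<not> (\<exists>i<pchain_end P R L. x = pchain P R L i)" "x \<noteq> pchain P R L (pchain_end P R L)"
    using assms(2) less_imp_le by blast+
  then show ?thesis
    unfolding promotion_def using assms(1) by auto
qed

lemma promotion_cases [consumes 3, case_names end_of_chain on_chain off_chain]:
  assumes "L \<in> labelings P" "P \<noteq> {}" "x \<in> P"
  obtains
    (end_of_chain) "x = pchain P R L (pchain_end P R L)" "promotion P R L x = card P"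
  | (on_chain) i where "i < pchain_end P R L" "x = pchain P R L i"
      "promotion P R L x = L (pchain P R L (Suc i)) - 1"
  | (off_chain) "\<forall>i\<le>pchain_end P R L. x \<noteq> pchain P R L i" "promotion P R L x = L x - 1"
proof (cases "\<exists>i\<le>pchain_end P R L. x = pchain P R L i")
  case True
  then obtain i where i: "i \<le> pchain_end P R L" "x = pchain P R L i"
    by blast
  show ?thesis
  proof (cases "i = pchain_end P R L")
    case True
    then show ?thesis
      using end_of_chain i promotion_pchain_end[OF assms(1,2)] by simp
  next
    case False
    then show ?thesis
      using on_chain[of i] i promotion_pchain[OF assms(1,2)] by simp
  qed
next
  case False
  then show ?thesis
    using that promotion_off_pchain[OF assms(3)] by blast
qed

lemma pchain_0_eq:
  assumes "L \<in> labelings P" "x \<in> P" "L x = 1"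
  shows "pchain P R L 0 = x"
proof -
  have "pchain P R L 0 \<in> P" "L (pchain P R L 0) = L x"
    using pchain_0[OF assms(1)] assms(2,3) by auto
  then show ?thesis
    using labeling_eq_iff[OF assms(1) _ assms(2)] by blast
qed

lemma promotion_pchain_if:
  assumes "L \<in> labelings P" "P \<noteq> {}" "i \<le> pchain_end P R L"
  shows "promotion P R L (pchain P R L i) =
    (if is_maximal P R (pchain P R L i) then card P else L (lsucc P R L (pchain P R L i)) - 1)"
proof (cases "is_maximal P R (pchain P R L i)")
  case True
  then have "i = pchain_end P R L"
    using pchain_end_le[OF True] assms(3) by simp
  then show ?thesis
    using True promotion_pchain_end[OF assms(1,2)] by simp
next
  case False
  then have "i \<noteq> pchain_end P R L"
    using pchain_end_maximal[OF assms(1,2)] by auto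
  then have "i < pchain_end P R L"
    using assms(3) by simp
  then show ?thesis
    using False promotion_pchain[OF assms(1,2)] pchain_Suc by simp
qed

lemma promotion_below_pchain:
  assumes "L \<in> labelings P" "P \<noteq> {}" "x \<in> P" "j \<le> pchain_end P R L"
    and "pless R x (pchain P R L j)" "\<forall>i<j. x \<noteq> pchain P R L i"
  shows "promotion P R L x = L x - 1"
proof (rule promotion_off_pchain[OF assms(3)], intro allI impI)
  fix i assume i: "i \<le> pchain_end P R L"
  consider "i < j" | "i = j" | "j < i"
    by linarith
  then show "x \<noteq> pchain P R L i"
  proof cases
    case 3
    then have "pless R (pchain P R L j) (pchain P R L i)"
      using pchain_less[OF assms(1,2) _ i] by simp
    then show ?thesis
      using assms(5) pless_trans pless_irrefl by blast
  qed (use assms(5,6) in auto)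
qed

lemma promotion_outside: "x \<notin> P \<Longrightarrow> promotion P R L x = 0"
  by (simp add: promotion_def)

lemma promotion_range:
  assumes "L \<in> labelings P" "P \<noteq> {}" "x \<in> P"
  shows "1 \<le> promotion P R L x \<and> promotion P R L x \<le> card P"
  using assms
proof (cases rule: promotion_cases)
  case end_of_chain
  then show ?thesis
    using card_P_ge_1[OF assms(2)] by simp
next
  case (on_chain i)
  let ?w = "pchain P R L (Suc i)"
  have "?w \<in> P" "?w \<noteq> pchain P R L 0"
    using on_chain(1) pchain_in[OF assms(1,2)] pchain_eq_iff[OF assms(1,2), of "Suc i" 0] by simp_all
  then show ?thesis
    using on_chain(3) label_ge_2_if_not_pchain_0[OF assms(1,2)] labeling_range[OF assms(1)] by fastforce
next
  case off_chain
  then show ?thesis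
    using label_ge_2_if_not_pchain_0[OF assms] labeling_range[OF assms(1,3)] by fastforce
qed

lemma promotion_onto:
  assumes "L \<in> labelings P" "P \<noteq> {}" "1 \<le> k" "k \<le> card P"
  shows "k \<in> promotion P R L ` P"
proof (cases "k = card P")
  case True
  then show ?thesis
    using promotion_pchain_end[OF assms(1,2)] pchain_in[OF assms(1,2) order_refl] by (metis image_eqI)
next
  case False
  let ?e = "pchain_end P R L" and ?v = "pchain P R L"
  obtain y where y: "y \<in> P" "L y = k + 1"
    using labeling_inv_into[OF assms(1), of "k + 1"] assms(4) False by force
  show ?thesis
  proof (cases "\<exists>i<?e. y = ?v (Suc i)")
    case True
    then obtain i where i: "i < ?e" "y = ?v (Suc i)"
      by blast
    then have "promotion P R L (?v i) = k"
      using promotion_pchain[OF assms(1,2)] y by simp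
    moreover have "?v i \<in> P"
      using pchain_in[OF assms(1,2)] i by simp
    ultimately show ?thesis
      by (metis image_eqI)
  next
    case False
    have "y \<noteq> ?v 0"
      using y pchain_0[OF assms(1,2)] assms(3) by auto
    have "\<forall>i\<le>?e. y \<noteq> ?v i"
    proof (intro allI impI)
      fix i assume "i \<le> ?e"
      then show "y \<noteq> ?v i"
        using False \<open>y \<noteq> ?v 0\<close> by (cases i) auto
    qed
    then have "promotion P R L y = k"
      using promotion_off_pchain y by simp
    then show ?thesis
      using y by (metis image_eqI)
  qed
qed

lemma promotion_labeling:
  assumes "L \<in> labelings P"
  shows "promotion P R L \<in> labelings P"
proof (cases "P = {}")
  case True
  then show ?thesis
    by (simp add: labelings_def promotion_def bij_betw_def)
next
  case False
  have image: "promotion P R L ` P = {1..card P}"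
    using promotion_range[OF assms False] promotion_onto[OF assms False] by fastforce
  then have "inj_on (promotion P R L) P"
    using finite_P by (intro eq_card_imp_inj_on) simp_all
  then show ?thesis
    using image promotion_outside by (auto simp: labelings_def bij_betw_def)
qed

lemma funpow_promotion_labeling:
  "L \<in> labelings P \<Longrightarrow> (promotion P R ^^ k) L \<in> labelings P"
  by (induction k) (simp_all add: promotion_labeling)

definition sorted_above :: "nat \<Rightarrow> ('a \<Rightarrow> nat) \<Rightarrow> bool" where
  "sorted_above K L \<longleftrightarrow> (\<forall>x\<in>P. \<forall>y\<in>P. pless R x y \<longrightarrow> K < L x \<longrightarrow> L x < L y)"

lemma sorted_above_card: "L \<in> labelings P \<Longrightarrow> sorted_above (card P) L"
  unfolding sorted_above_def using labeling_range by fastforce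

lemma sorted_above_mono: "sorted_above K L \<Longrightarrow> K \<le> K' \<Longrightarrow> sorted_above K' L"
  unfolding sorted_above_def by fastforce

lemma promotion_ge_pred:
  assumes "L \<in> labelings P" "P \<noteq> {}" "sorted_above K L" "y \<in> P" "K < L y"
  shows "L y - 1 \<le> promotion P R L y"
  using assms(1,2,4)
proof (cases rule: promotion_cases)
  case end_of_chain
  then show ?thesis
    using labeling_range[OF assms(1,4)] by linarith
next
  case (on_chain i)
  have "pless R y (pchain P R L (Suc i))" "pchain P R L (Suc i) \<in> P"
    using on_chain pchain_less[OF assms(1,2), of i "Suc i"] pchain_in[OF assms(1,2), of "Suc i"]
    by simp_all
  then have "L y < L (pchain P R L (Suc i))"
    using assms(3-5) unfolding sorted_above_def by blast
  then show ?thesis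
    using on_chain by simp
qed simp

lemma promotion_le_if_sorted_above:
  assumes L: "L \<in> labelings P" "P \<noteq> {}" and sorted: "sorted_above K L"
    and xy: "pless R x y" and K: "K - 1 < promotion P R L x"
  shows "promotion P R L x \<le> promotion P R L y"
proof -
  have "x \<in> P" "y \<in> P"
    using pless_in_P[OF xy] by simp_all
  from L \<open>x \<in> P\<close> show ?thesis
  proof (cases rule: promotion_cases)
    case end_of_chain
    then have "is_maximal P R x"
      using pchain_end_maximal[OF L] by simp
    then show ?thesis
      using xy \<open>y \<in> P\<close> unfolding is_maximal_def by blast
  next
    case (on_chain i)
    let ?w = "pchain P R L (Suc i)"
    have "?w = lsucc P R L x"
      using on_chain pchain_Suc by simp
    then have "L ?w \<le> L y"
      using lsucc_least[OF L(1) \<open>x \<in> P\<close>] not_maximal_before_pchain_end[OF on_chain(1)] on_chain(2)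
        xy \<open>y \<in> P\<close> by auto
    moreover have "K < L ?w"
      using K on_chain(3) by simp
    ultimately have "L y - 1 \<le> promotion P R L y"
      using promotion_ge_pred[OF L sorted \<open>y \<in> P\<close>] by simp
    then show ?thesis
      using on_chain(3) \<open>L ?w \<le> L y\<close> by simp
  next
    case off_chain
    have "K < L x"
      using K off_chain(2) labeling_range[OF L(1) \<open>x \<in> P\<close>] by simp
    then have "L x < L y"
      using sorted xy \<open>x \<in> P\<close> \<open>y \<in> P\<close> unfolding sorted_above_def by blast
    moreover have "L y - 1 \<le> promotion P R L y"
      using promotion_ge_pred[OF L sorted \<open>y \<in> P\<close>] \<open>K < L x\<close> \<open>L x < L y\<close> by simp
    ultimately show ?thesis
      using off_chain(2) by simp
  qed
qed

lemma sorted_above_promotion: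
  assumes L: "L \<in> labelings P" "P \<noteq> {}" and sorted: "sorted_above K L"
  shows "sorted_above (K - 1) (promotion P R L)"
  unfolding sorted_above_def
proof (intro ballI impI)
  fix x y assume xy: "x \<in> P" "y \<in> P" "pless R x y" and K: "K - 1 < promotion P R L x"
  have "promotion P R L x \<noteq> promotion P R L y"
    using labeling_eq_iff[OF promotion_labeling[OF L(1)]] xy by fastforce
  moreover have "promotion P R L x \<le> promotion P R L y"
    using promotion_le_if_sorted_above[OF L sorted xy(3) K] .
  ultimately show "promotion P R L x < promotion P R L y"
    by simp
qed

lemma sorted_above_funpow_promotion:
  assumes "L \<in> labelings P" "P \<noteq> {}"
  shows "sorted_above (card P - k) ((promotion P R ^^ k) L)"
proof (induction k)
  case 0
  then show ?case
    using sorted_above_card[OF assms(1)] by simp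
next
  case (Suc k)
  then have "sorted_above (card P - k - 1) (promotion P R ((promotion P R ^^ k) L))"
    using sorted_above_promotion[OF funpow_promotion_labeling[OF assms(1)] assms(2)] by blast
  then show ?case
    by simp
qed

end

section \<open>Posets whose least element has a unique cover\<close>

text \<open>Given the labels a of the least element m and c of its unique cover b, this is the
  pair of their labels after one promotion (see promotion_m and promotion_b).\<close>

fun bottom_step :: "nat \<times> nat \<Rightarrow> nat \<times> nat" where
  "bottom_step (a, c) =
    (if a = 1 then 1 else a - 1,
     if c = 1 then (if a = 2 then 2 else 1) else if a = 1 \<and> c = 2 then 2 else c - 1)"

lemma funpow_bottom_step_increasing:
  "1 \<le> a \<Longrightarrow> a < c \<Longrightarrow> (bottom_step ^^ k) (a, c) = (max (a - k) 1, max (c - k) 2)"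
  by (induction k) (auto simp: max_def)

lemma funpow_bottom_step_decreasing:
  "1 \<le> c \<Longrightarrow> c < a \<Longrightarrow>
    (bottom_step ^^ k) (a, c) = (if a - 1 \<le> k then (1, 2) else (a - k, max (c - k) 1))"
  by (induction k) (auto simp: max_def)

lemma funpow_bottom_step_eq_iff:
  assumes "1 \<le> a" "1 \<le> c" "a \<noteq> c"
  shows "(bottom_step ^^ k) (a, c) = (1, 2) \<longleftrightarrow> (if a < c then c - 2 else a - 1) \<le> k"
proof (cases "a < c")
  case True
  then show ?thesis
    using funpow_bottom_step_increasing[OF assms(1) True, of k] by (auto simp: max_def)
next
  case False
  then show ?thesis
    using funpow_bottom_step_decreasing[of c a k] assms by auto
qed

lemma funpow_bottom_step_first_hit_iff:
  assumes "a \<in> {1..n}" "c \<in> {1..n}" "a \<noteq> c"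
  shows "(bottom_step ^^ (n - 2)) (a, c) = (1, 2) \<and> (\<forall>k < n - 2. (bottom_step ^^ k) (a, c) \<noteq> (1, 2))
    \<longleftrightarrow> c = n \<or> a = n - 1"
proof -
  let ?t = "if a < c then c - 2 else a - 1"
  have "(bottom_step ^^ (n - 2)) (a, c) = (1, 2) \<and> (\<forall>k < n - 2. (bottom_step ^^ k) (a, c) \<noteq> (1, 2))
    \<longleftrightarrow> ?t \<le> n - 2 \<and> (\<forall>k < n - 2. \<not> ?t \<le> k)"
    using funpow_bottom_step_eq_iff assms by simp
  also have "\<dots> \<longleftrightarrow> ?t = n - 2"
  proof
    assume "?t \<le> n - 2 \<and> (\<forall>k < n - 2. \<not> ?t \<le> k)"
    then show "?t = n - 2"
      using le_neq_implies_less order_refl by blast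
  qed simp
  also have "\<dots> \<longleftrightarrow> c = n \<or> a = n - 1"
    using assms by auto
  finally show ?thesis .
qed

locale bottom_pair_poset = finite_poset +
  fixes m b :: 'a
  assumes m_in: "m \<in> P" and b_in: "b \<in> P" and m_neq_b: "m \<noteq> b"
    and m_less: "\<And>x. x \<in> P \<Longrightarrow> x \<noteq> m \<Longrightarrow> pless R m x"
    and b_less: "\<And>x. x \<in> P \<Longrightarrow> x \<noteq> m \<Longrightarrow> x \<noteq> b \<Longrightarrow> pless R b x"
begin

lemma P_nonempty: "P \<noteq> {}"
  using m_in by auto

lemma card_ge_2: "2 \<le> card P"
proof -
  have "card {m, b} \<le> card P"
    using m_in b_in finite_P by (intro card_mono) auto
  then show ?thesis
    using m_neq_b by simp
qed

lemma pless_m_iff: "pless R m x \<longleftrightarrow> x \<in> P \<and> x \<noteq> m"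
  using m_less pless_in_P pless_irrefl by metis

lemma pless_b_iff: "pless R b x \<longleftrightarrow> x \<in> P \<and> x \<noteq> m \<and> x \<noteq> b"
  using b_less pless_in_P pless_irrefl pless_asym m_less b_in m_neq_b by metis

lemma not_maximal_m: "\<not> is_maximal P R m"
  using pless_m_iff b_in m_neq_b unfolding is_maximal_def by auto

lemma b_maximal_iff: "is_maximal P R b \<longleftrightarrow> P = {m, b}"
  using pless_b_iff m_in b_in unfolding is_maximal_def by auto

lemma card_ge_3_if_not_maximal_b: "\<not> is_maximal P R b \<Longrightarrow> 3 \<le> card P"
proof -
  assume "\<not> is_maximal P R b"
  then obtain y where "pless R b y"
    using b_in unfolding is_maximal_def by blast
  then have "card {m, b, y} \<le> card P" "y \<noteq> m" "y \<noteq> b"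
    using pless_b_iff m_in b_in finite_P by (auto intro: card_mono)
  then show ?thesis
    using m_neq_b by simp
qed

lemma bottom_labels_range:
  "L \<in> labelings P \<Longrightarrow> L m \<in> {1..card P} \<and> L b \<in> {1..card P} \<and> L m \<noteq> L b"
  using labeling_range[of L P m] labeling_range[of L P b] labeling_eq_iff[of L P m b] m_in b_in m_neq_b
  by auto

lemma label_lsucc_m:
  assumes L: "L \<in> labelings P" and "L m = 1"
  shows "L (lsucc P R L m) = 2"
proof -
  let ?y = "inv_into P L 2"
  have y: "?y \<in> P" "L ?y = 2"
    using labeling_inv_into[OF L _ card_ge_2] by simp_all
  then have "L ?y \<noteq> L m"
    using \<open>L m = 1\<close> by simp
  then have "pless R m ?y"
    using y(1) pless_m_iff by auto
  moreover have "\<forall>z\<in>P. pless R m z \<longrightarrow> L ?y \<le> L z"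
  proof (intro ballI impI)
    fix z assume "z \<in> P" "pless R m z"
    then have "L z \<noteq> L m"
      using pless_m_iff labeling_eq_iff[OF L _ m_in] by blast
    then show "L ?y \<le> L z"
      using labeling_range[OF L \<open>z \<in> P\<close>] \<open>L m = 1\<close> y(2) by simp
  qed
  ultimately have "lsucc P R L m = ?y"
    using lsucc_eqI[OF L y(1)] by blast
  then show ?thesis
    using y(2) by simp
qed

lemma label_lsucc_b:
  assumes L: "L \<in> labelings P" and k: "1 \<le> k" "k \<le> card P" "k \<noteq> L m" "k \<noteq> L b"
    and below: "\<And>j. 1 \<le> j \<Longrightarrow> j < k \<Longrightarrow> j = L m \<or> j = L b"
  shows "L (lsucc P R L b) = k"
proof -
  obtain y where y: "y \<in> P" "L y = k"
    using labeling_inv_into[OF L k(1,2)] by auto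
  have "\<forall>z\<in>P. pless R b z \<longrightarrow> k \<le> L z"
  proof (intro ballI impI)
    fix z assume "z \<in> P" "pless R b z"
    then have "L z \<noteq> L m" "L z \<noteq> L b"
      using pless_b_iff labeling_eq_iff[OF L] m_in b_in by auto
    then show "k \<le> L z"
      using below labeling_range[OF L \<open>z \<in> P\<close>] not_le by blast
  qed
  moreover have "pless R b y"
    using y k(3,4) pless_b_iff by auto
  ultimately show ?thesis
    using lsucc_eqI[OF L y(1)] y(2) by simp
qed

lemma promotion_m:
  assumes L: "L \<in> labelings P"
  shows "promotion P R L m = (if L m = 1 then 1 else L m - 1)"
proof (cases "L m = 1")
  case True
  then have "pchain P R L 0 = m"
    using pchain_0_eq[OF L m_in] by simp
  then show ?thesis
    using promotion_pchain_if[OF L P_nonempty, of 0] not_maximal_m label_lsucc_m[OF L] True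
    by simp
next
  case False
  have "pchain P R L 0 \<in> P" "pchain P R L 0 \<noteq> m"
    using pchain_0[OF L P_nonempty] False by auto
  then have "pless R m (pchain P R L 0)"
    using m_less by blast
  then show ?thesis
    using promotion_below_pchain[OF L P_nonempty m_in, of 0] False by simp
qed

lemma pchain_from_m:
  assumes L: "L \<in> labelings P" and "L m = 1"
  shows "pchain P R L 0 = m" "0 < pchain_end P R L"
    "pchain P R L 1 \<in> P" "L (pchain P R L 1) = 2"
proof -
  show v0: "pchain P R L 0 = m"
    using pchain_0_eq[OF L m_in \<open>L m = 1\<close>] .
  then show "0 < pchain_end P R L"
    using pchain_end_maximal[OF L P_nonempty] not_maximal_m by (metis gr0I)
  then show "pchain P R L 1 \<in> P"
    using pchain_in[OF L P_nonempty] by simp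
  show "L (pchain P R L 1) = 2"
    using label_lsucc_m[OF L \<open>L m = 1\<close>] v0 pchain_Suc[of L 0] by simp
qed

lemma promotion_b_if_first:
  assumes L: "L \<in> labelings P" and "L b = 1"
  shows "promotion P R L b = (if L m = 2 then 2 else 1)"
proof (cases "is_maximal P R b")
  case True
  then have "card P = 2" "L m \<noteq> 1"
    using b_maximal_iff m_neq_b labeling_eq_iff[OF L m_in b_in] \<open>L b = 1\<close> by auto
  then have "L m = 2"
    using labeling_range[OF L m_in] by simp
  then show ?thesis
    using promotion_pchain_if[OF L P_nonempty, of 0] pchain_0_eq[OF L b_in \<open>L b = 1\<close>] True
      \<open>card P = 2\<close> by simp
next
  case False
  have "L (lsucc P R L b) = (if L m = 2 then 3 else 2)"
  proof (rule label_lsucc_b[OF L])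
    fix j :: nat assume "1 \<le> j" "j < (if L m = 2 then 3 else 2)"
    then show "j = L m \<or> j = L b"
      using \<open>L b = 1\<close> by (auto split: if_splits)
  qed (use card_ge_3_if_not_maximal_b[OF False] \<open>L b = 1\<close> bottom_labels_range[OF L] in auto)
  then show ?thesis
    using promotion_pchain_if[OF L P_nonempty, of 0] pchain_0_eq[OF L b_in \<open>L b = 1\<close>] False
    by simp
qed

lemma promotion_b_if_second:
  assumes L: "L \<in> labelings P" and "L m = 1" "L b = 2"
  shows "promotion P R L b = 2"
proof -
  note v = pchain_from_m[OF L \<open>L m = 1\<close>]
  have "pchain P R L 1 = b"
    using v(3,4) labeling_eq_iff[OF L _ b_in] \<open>L b = 2\<close> by simp
  then have "promotion P R L b = (if is_maximal P R b then card P else L (lsucc P R L b) - 1)"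
    using promotion_pchain_if[OF L P_nonempty, of 1] v(2) by simp
  moreover have "L (lsucc P R L b) = 3" if "\<not> is_maximal P R b"
  proof (rule label_lsucc_b[OF L])
    fix j :: nat assume "1 \<le> j" "j < 3"
    then show "j = L m \<or> j = L b"
      using assms(2,3) by auto
  qed (use card_ge_3_if_not_maximal_b[OF that] assms(2,3) in auto)
  ultimately show ?thesis
    using b_maximal_iff m_neq_b by auto
qed

lemma promotion_b_if_later:
  assumes L: "L \<in> labelings P" and "L b \<noteq> 1" "\<not> (L m = 1 \<and> L b = 2)"
  shows "promotion P R L b = L b - 1"
proof (cases "L m = 1")
  case True
  note v = pchain_from_m[OF L True]
  have "pchain P R L 1 \<noteq> m" "pchain P R L 1 \<noteq> b"
    using v(4) True assms(3) by auto
  then have "pless R b (pchain P R L 1)"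
    using pless_b_iff v(3) by simp
  then show ?thesis
    using promotion_below_pchain[OF L P_nonempty b_in, of 1] v(1,2) m_neq_b by simp
next
  case False
  have "pchain P R L 0 \<in> P" "L (pchain P R L 0) = 1"
    using pchain_0[OF L P_nonempty] by simp_all
  then have "pless R b (pchain P R L 0)"
    using pless_b_iff False assms(2) by auto
  then show ?thesis
    using promotion_below_pchain[OF L P_nonempty b_in, of 0] by simp
qed

lemma promotion_b:
  "L \<in> labelings P \<Longrightarrow> promotion P R L b =
    (if L b = 1 then (if L m = 2 then 2 else 1) else if L m = 1 \<and> L b = 2 then 2 else L b - 1)"
  using promotion_b_if_first promotion_b_if_second promotion_b_if_later by simp

lemma bottom_labels_funpow_promotion:
  assumes "L \<in> labelings P"
  shows "(((promotion P R ^^ k) L) m, ((promotion P R ^^ k) L) b) = (bottom_step ^^ k) (L m, L b)"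
proof (induction k)
  case (Suc k)
  let ?L = "(promotion P R ^^ k) L"
  have "(bottom_step ^^ Suc k) (L m, L b) = bottom_step (?L m, ?L b)"
    using Suc.IH by simp
  then show ?case
    using promotion_m[of ?L] promotion_b[of ?L] funpow_promotion_labeling[OF assms] by simp
qed simp

lemma linear_extension_bottom_labels:
  assumes L: "L \<in> labelings P" and ext: "is_linear_extension P R L"
  shows "L m = 1" "L b = 2"
proof -
  have labels: "1 \<le> L m" "1 \<le> L b" "L m \<noteq> L b"
    using bottom_labels_range[OF L] by auto
  obtain x where x: "x \<in> P" "L x = 1"
    using labeling_inv_into[OF L, of 1] card_ge_2 by auto
  have "\<not> L m < L x"
    using x labels by simp
  then have "x = m"
    using ext x(1) m_less m_in unfolding is_linear_extension_def by blast
  then show "L m = 1"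
    using x by simp
  obtain y where y: "y \<in> P" "L y = 2"
    using labeling_inv_into[OF L, of 2] card_ge_2 by auto
  have "\<not> L b < L y"
    using y labels \<open>L m = 1\<close> by simp
  moreover have "y \<noteq> m"
    using y \<open>L m = 1\<close> by auto
  ultimately have "y = b"
    using ext y(1) b_less b_in unfolding is_linear_extension_def by blast
  then show "L b = 2"
    using y by simp
qed

lemma linear_extension_if_bottom_labels:
  assumes L: "L \<in> labelings P" and "L m = 1" "L b = 2" and sorted: "sorted_above 3 L"
  shows "is_linear_extension P R L"
  unfolding is_linear_extension_def
proof (intro ballI impI)
  fix x y assume xy: "x \<in> P" "y \<in> P" "pless R x y"
  have ge2: "2 \<le> L z" if "z \<in> P" "z \<noteq> m" for z
    using labeling_eq_iff[OF L that(1) m_in] labeling_range[OF L that(1)] that \<open>L m = 1\<close> by simp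
  have ge3: "3 \<le> L z" if "z \<in> P" "z \<noteq> m" "z \<noteq> b" for z
    using ge2[OF that(1,2)] labeling_eq_iff[OF L that(1) b_in] that \<open>L b = 2\<close> by simp
  have "y \<noteq> m"
    using xy pless_m_iff pless_asym by blast
  consider "x = m" | "x = b" | "x \<noteq> m" "x \<noteq> b"
    by blast
  then show "L x < L y"
  proof cases
    case 1
    then show ?thesis
      using ge2[OF xy(2) \<open>y \<noteq> m\<close>] \<open>L m = 1\<close> by simp
  next
    case 2
    then show ?thesis
      using ge3[of y] xy pless_b_iff \<open>L b = 2\<close> by simp
  next
    case 3
    then have "y \<noteq> b"
      using xy pless_b_iff pless_asym by blast
    then have "L x \<noteq> L y" "3 \<le> L x" "3 \<le> L y"
      using labeling_eq_iff[OF L xy(1,2)] xy ge3 3 \<open>y \<noteq> m\<close> by auto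
    then show ?thesis
      using sorted xy unfolding sorted_above_def by fastforce
  qed
qed

lemma linear_extension_funpow_promotion_imp:
  assumes L: "L \<in> labelings P" and "is_linear_extension P R ((promotion P R ^^ k) L)"
  shows "(bottom_step ^^ k) (L m, L b) = (1, 2)"
  using linear_extension_bottom_labels[OF funpow_promotion_labeling[OF L] assms(2)]
    bottom_labels_funpow_promotion[OF L, of k] by simp

lemma linear_extension_funpow_promotion_if:
  assumes L: "L \<in> labelings P" and "(bottom_step ^^ k) (L m, L b) = (1, 2)" "card P - 3 \<le> k"
  shows "is_linear_extension P R ((promotion P R ^^ k) L)"
proof (rule linear_extension_if_bottom_labels)
  show "((promotion P R ^^ k) L) m = 1" "((promotion P R ^^ k) L) b = 2"
    using assms(2) bottom_labels_funpow_promotion[OF L, of k] by simp_all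
  show "sorted_above 3 ((promotion P R ^^ k) L)"
    using sorted_above_funpow_promotion[OF L P_nonempty, of k] sorted_above_mono assms(3) by simp
qed (rule funpow_promotion_labeling[OF L])

lemma quasi_tangled_iff_first_hit:
  assumes L: "L \<in> labelings P"
  shows "quasi_tangled P R L \<longleftrightarrow>
    (bottom_step ^^ (card P - 2)) (L m, L b) = (1, 2) \<and>
    (\<forall>k < card P - 2. (bottom_step ^^ k) (L m, L b) \<noteq> (1, 2))"
    (is "_ \<longleftrightarrow> ?hit (card P - 2) \<and> (\<forall>k < card P - 2. \<not> ?hit k)")
proof
  assume q: "quasi_tangled P R L"
  have "\<not> ?hit k" if "k < card P - 2" for k
  proof
    assume "?hit k"
    then have "?hit (card P - 3)"
      using funpow_bottom_step_eq_iff bottom_labels_range[OF L] that by fastforce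
    then have "is_linear_extension P R ((promotion P R ^^ (card P - 3)) L)"
      using linear_extension_funpow_promotion_if[OF L] by blast
    moreover have "card P - 3 < card P - 2"
      using that by simp
    ultimately show False
      using q unfolding quasi_tangled_def by blast
  qed
  then show "?hit (card P - 2) \<and> (\<forall>k < card P - 2. \<not> ?hit k)"
    using q linear_extension_funpow_promotion_imp[OF L] unfolding quasi_tangled_def by blast
next
  assume "?hit (card P - 2) \<and> (\<forall>k < card P - 2. \<not> ?hit k)"
  then show "quasi_tangled P R L"
    using linear_extension_funpow_promotion_imp[OF L] linear_extension_funpow_promotion_if[OF L]
    unfolding quasi_tangled_def by auto
qed

lemma quasi_tangled_iff:
  "L \<in> labelings P \<Longrightarrow> quasi_tangled P R L \<longleftrightarrow> L b = card P \<or> L m = card P - 1"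
  using quasi_tangled_iff_first_hit funpow_bottom_step_first_hit_iff bottom_labels_range by blast

end

theorem mainTheorem8:
  fixes P :: "'a set" and R :: "('a \<times> 'a) set" and n :: nat
  assumes "finite P" and "partial_order_on P R" and "card P = n"
    and "\<exists>!x. is_minimal P R x"
    and "\<forall>x. is_minimal P R x \<longrightarrow> card {y. covers P R x y} = 1"
  shows "card {L \<in> labelings P. quasi_tangled P R L} = 2 * fact (n - 1) - fact (n - 2)"
proof -
  interpret finite_poset P R
    using assms(1,2) by unfold_locales
  obtain m where m: "is_minimal P R m"
    using assms(4) by blast
  obtain b where b: "{y. covers P R m y} = {b}"
    using assms(5) m card_1_singletonE by blast
  then have "pless R m b"
    unfolding covers_def by blast
  interpret bottom_pair_poset P R m b
  proof
    show "m \<in> P" "b \<in> P" "m \<noteq> b"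
      using m pless_in_P \<open>pless R m b\<close> unfolding is_minimal_def by auto
    show m_less: "\<And>x. x \<in> P \<Longrightarrow> x \<noteq> m \<Longrightarrow> pless R m x"
      using unique_minimal_less[OF assms(4) m] by blast
    show "\<And>x. x \<in> P \<Longrightarrow> x \<noteq> m \<Longrightarrow> x \<noteq> b \<Longrightarrow> pless R b x"
      using unique_cover_less[OF b] m_less by blast
  qed
  have "{L \<in> labelings P. quasi_tangled P R L} = {L \<in> labelings P. L b = n \<or> L m = n - 1}"
    using quasi_tangled_iff assms(3) by auto
  then show ?thesis
    using card_labelings_top_or_second_to_top[OF assms(1) b_in m_in m_neq_b[symmetric]] assms(3)
    by simp
qed

end
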